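(* Consider the generalized trimmed lasso problem $$\min_{x_0,\ldots,x_L}\ f(x_0,\ldots,x_L)+\sum_{l=1}^L\gamma_l T_{K_l,m_l,p_l}(D_lx_l-c_l),$$ where $f:\mathbb{R}^{n_0+\cdots+n_L}\to\mathbb{R}$ is directionally differentiable and Lipschitz continuous with constant $M$ with respect to the $\ell_2$ norm, and suppose that for every $l\in[L]$ there is $\overline{x}_l$ with $D_l\overline{x}_l=c_l$. Then every d-stationary point $x^*$ satisfies $T_{K_l,m_l,p_l}(D_lx_l^*-c_l)=0$ for all $l\in[L]$ provided $\gamma_l>M/\sigma_{K_l,m_l,p_l}(D_l)$ for all $l\in[L]$. If moreover $p_l=1$, $D_l=I$, $c_l=0$ for all $l\in[L]$ and $f$ is Lipschitz continuous with constant $M'$ with respect to the $\ell_1$ norm, the threshold may be replaced by $\gamma_l>M'$.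
   Context: Trimmed $\ell_1$ norm: $T_{K,m,p}(z)=\min_{\Lambda\subset[m],|\Lambda|=m-K}\sum_{i\in\Lambda}\|z_i\|_2$ for $z=(z_1^\top,\ldots,z_m^\top)^\top$, $z_i\in\mathbb{R}^p$, $K\in\{0,\ldots,m-1\}$. Data: $n_0\ge0$, $\gamma_l>0$, $K_l\in\{0,\ldots,m_l-1\}$, $c_l\in\mathbb{R}^{m_lp_l}$, $D_l\ne0$ an $m_lp_l\times n_l$ matrix. d-stationary: directional derivative of the objective at $x^*$ is $\ge0$ in every direction. $\sigma_{\min}(A)$ = smallest nonzero singular value. For $D$ with $p\times n$ blocks and $(D)_\Lambda$ the submatrix of blocks indexed by $\Lambda$: $\sigma_{K,m,p}(D)=\sigma_{\min}(D)$ if $D$ is surjective, else $\min\{\sigma_{\min}((D)_\Lambda)\mid \Lambda\subset[m],|\Lambda|=m-K,(D)_\Lambda\ne0\}$. *)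

theory Defs
  imports "HOL-Analysis.Analysis"
begin

text \<open>A point x = (x_0,...,x_L) is represented as
  x :: nat => nat => real, where x l i is coordinate i (0-based, i < n l) of block l.
  The ambient space is the set of such functions vanishing outside the index range.
  A matrix with R rows and n columns is a function A :: nat => nat => real
  (A r j, r < R, j < n).  [m] is rendered 0-based as {..<m}; block i of a vector
  z in R^(m p) consists of the entries z (i*p + k), k < p.\<close>

definition point_space :: "nat \<Rightarrow> (nat \<Rightarrow> nat) \<Rightarrow> (nat \<Rightarrow> nat \<Rightarrow> real) set" where
  "point_space L n = {x. \<forall>l i. (L < l \<or> n l \<le> i) \<longrightarrow> x l i = 0}"

definition norm2_pt :: "nat \<Rightarrow> (nat \<Rightarrow> nat) \<Rightarrow> (nat \<Rightarrow> nat \<Rightarrow> real) \<Rightarrow> real" where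
  "norm2_pt L n x = sqrt (\<Sum>l\<le>L. \<Sum>i<n l. (x l i)\<^sup>2)"

definition norm1_pt :: "nat \<Rightarrow> (nat \<Rightarrow> nat) \<Rightarrow> (nat \<Rightarrow> nat \<Rightarrow> real) \<Rightarrow> real" where
  "norm1_pt L n x = (\<Sum>l\<le>L. \<Sum>i<n l. \<bar>x l i\<bar>)"

definition diff_pt :: "(nat \<Rightarrow> nat \<Rightarrow> real) \<Rightarrow> (nat \<Rightarrow> nat \<Rightarrow> real) \<Rightarrow> (nat \<Rightarrow> nat \<Rightarrow> real)" where
  "diff_pt x y = (\<lambda>l i. x l i - y l i)"

definition has_dir_deriv ::
  "((nat \<Rightarrow> nat \<Rightarrow> real) \<Rightarrow> real) \<Rightarrow> (nat \<Rightarrow> nat \<Rightarrow> real) \<Rightarrow> (nat \<Rightarrow> nat \<Rightarrow> real) \<Rightarrow> real \<Rightarrow> bool" where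
  "has_dir_deriv F x d Dv \<longleftrightarrow>
     ((\<lambda>t. (F (\<lambda>l i. x l i + t * d l i) - F x) / t) \<longlongrightarrow> Dv) (at_right 0)"

definition dir_differentiable ::
  "nat \<Rightarrow> (nat \<Rightarrow> nat) \<Rightarrow> ((nat \<Rightarrow> nat \<Rightarrow> real) \<Rightarrow> real) \<Rightarrow> bool" where
  "dir_differentiable L n F \<longleftrightarrow>
     (\<forall>x\<in>point_space L n. \<forall>d\<in>point_space L n. \<exists>Dv. has_dir_deriv F x d Dv)"

definition d_stationary ::
  "nat \<Rightarrow> (nat \<Rightarrow> nat) \<Rightarrow> ((nat \<Rightarrow> nat \<Rightarrow> real) \<Rightarrow> real) \<Rightarrow> (nat \<Rightarrow> nat \<Rightarrow> real) \<Rightarrow> bool" where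
  "d_stationary L n F x \<longleftrightarrow> x \<in> point_space L n \<and>
     (\<forall>d\<in>point_space L n. \<exists>Dv. has_dir_deriv F x d Dv \<and> Dv \<ge> 0)"

definition block_norm :: "nat \<Rightarrow> (nat \<Rightarrow> real) \<Rightarrow> nat \<Rightarrow> real" where
  "block_norm p z i = L2_set (\<lambda>k. z (i * p + k)) {..<p}"

definition trimmed :: "nat \<Rightarrow> nat \<Rightarrow> nat \<Rightarrow> (nat \<Rightarrow> real) \<Rightarrow> real" where
  "trimmed K m p z =
     Min ((\<lambda>\<Lambda>. \<Sum>i\<in>\<Lambda>. block_norm p z i) ` {\<Lambda>. \<Lambda> \<subseteq> {..<m} \<and> card \<Lambda> = m - K})"

definition resid :: "nat \<Rightarrow> (nat \<Rightarrow> nat \<Rightarrow> real) \<Rightarrow> (nat \<Rightarrow> real) \<Rightarrow> (nat \<Rightarrow> real) \<Rightarrow> (nat \<Rightarrow> real)" where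
  "resid n D c x = (\<lambda>r. (\<Sum>j<n. D r j * x j) - c r)"

definition objective ::
  "nat \<Rightarrow> (nat \<Rightarrow> nat) \<Rightarrow> (nat \<Rightarrow> nat) \<Rightarrow> (nat \<Rightarrow> nat) \<Rightarrow> (nat \<Rightarrow> nat) \<Rightarrow> (nat \<Rightarrow> real)
   \<Rightarrow> (nat \<Rightarrow> nat \<Rightarrow> real) \<Rightarrow> (nat \<Rightarrow> nat \<Rightarrow> nat \<Rightarrow> real)
   \<Rightarrow> ((nat \<Rightarrow> nat \<Rightarrow> real) \<Rightarrow> real) \<Rightarrow> (nat \<Rightarrow> nat \<Rightarrow> real) \<Rightarrow> real" where
  "objective L n m p K \<gamma> c D f x =
     f x + (\<Sum>l=1..L. \<gamma> l * trimmed (K l) (m l) (p l) (resid (n l) (D l) (c l) (x l)))"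

text \<open>Singular values of the submatrix of A (n columns) formed by the rows in R:
  sigma is a nonzero singular value iff sigma > 0 and sigma^2 is an eigenvalue of A_R^T A_R.\<close>
definition nz_sing_vals :: "nat set \<Rightarrow> nat \<Rightarrow> (nat \<Rightarrow> nat \<Rightarrow> real) \<Rightarrow> real set" where
  "nz_sing_vals R n A = {\<sigma>. \<sigma> > 0 \<and> (\<exists>v. (\<exists>j<n. v j \<noteq> 0) \<and>
      (\<forall>j<n. (\<Sum>r\<in>R. A r j * (\<Sum>k<n. A r k * v k)) = \<sigma>\<^sup>2 * v j))}"

definition sigma_min :: "nat set \<Rightarrow> nat \<Rightarrow> (nat \<Rightarrow> nat \<Rightarrow> real) \<Rightarrow> real" where
  "sigma_min R n A = Min (nz_sing_vals R n A)"

definition mat_surj :: "nat \<Rightarrow> nat \<Rightarrow> (nat \<Rightarrow> nat \<Rightarrow> real) \<Rightarrow> bool" where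
  "mat_surj Rn n A \<longleftrightarrow> (\<forall>y. \<exists>v. \<forall>r<Rn. (\<Sum>j<n. A r j * v j) = y r)"

definition block_rows :: "nat \<Rightarrow> nat set \<Rightarrow> nat set" where
  "block_rows p \<Lambda> = {r. \<exists>i\<in>\<Lambda>. \<exists>k<p. r = i * p + k}"

definition sigma_K :: "nat \<Rightarrow> nat \<Rightarrow> nat \<Rightarrow> nat \<Rightarrow> (nat \<Rightarrow> nat \<Rightarrow> real) \<Rightarrow> real" where
  "sigma_K K m p n A =
     (if mat_surj (m * p) n A then sigma_min {..<m * p} n A
      else Min {sigma_min (block_rows p \<Lambda>) n A | \<Lambda>.
                  \<Lambda> \<subseteq> {..<m} \<and> card \<Lambda> = m - K \<and>
                  (\<exists>r\<in>block_rows p \<Lambda>. \<exists>j<n. A r j \<noteq> 0)})"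

end

theory Submission
  imports Defs "Jordan_Normal_Form.Char_Poly"
begin

text \<open>Suppose the trimmed term T of block l is positive at a d-stationary point x, and let \<Lambda>
  attain it. By feasibility there is a direction v with D v = -(D x_l - c) on the rows of \<Lambda>;
  moving block l along v decreases T at rate at least T while f grows at rate at most M |v|, so
  d-stationarity gives \<gamma> T \<le> M |v|. A minimal-norm such v is orthogonal to the kernel of the row
  submatrix, and minimising the Rayleigh quotient on that orthogonal complement produces a nonzero
  singular value \<sigma> with \<sigma> |v| \<le> |D v| \<le> T. Hence \<gamma> \<sigma> T \<le> M T, contradicting \<gamma> > M / \<sigma>.
  For D = I one takes v = -x_l on \<Lambda>, whose l1 norm is exactly T.\<close>

definition dot :: "nat \<Rightarrow> (nat \<Rightarrow> real) \<Rightarrow> (nat \<Rightarrow> real) \<Rightarrow> real" where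
  "dot n u v = (\<Sum>j<n. u j * v j)"

definition mat_vec :: "(nat \<Rightarrow> nat \<Rightarrow> real) \<Rightarrow> nat \<Rightarrow> (nat \<Rightarrow> real) \<Rightarrow> nat \<Rightarrow> real" where
  "mat_vec A n v r = (\<Sum>j<n. A r j * v j)"

definition sq_norm_rows :: "nat set \<Rightarrow> (nat \<Rightarrow> nat \<Rightarrow> real) \<Rightarrow> nat \<Rightarrow> (nat \<Rightarrow> real) \<Rightarrow> real" where
  "sq_norm_rows R A n u = (\<Sum>r\<in>R. (mat_vec A n u r)\<^sup>2)"

definition kernel_rows :: "nat set \<Rightarrow> (nat \<Rightarrow> nat \<Rightarrow> real) \<Rightarrow> nat \<Rightarrow> (nat \<Rightarrow> real) set" where
  "kernel_rows R A n = {k. \<forall>r\<in>R. mat_vec A n k r = 0}"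

definition orth_kernel :: "nat set \<Rightarrow> (nat \<Rightarrow> nat \<Rightarrow> real) \<Rightarrow> nat \<Rightarrow> (nat \<Rightarrow> real) \<Rightarrow> bool" where
  "orth_kernel R A n u \<longleftrightarrow> (\<forall>k\<in>kernel_rows R A n. dot n u k = 0)"

lemma dot_self_nonneg: "0 \<le> dot n u u"
  unfolding dot_def by (intro sum_nonneg) auto

lemma dot_self_eq_0D: "dot n u u = 0 \<Longrightarrow> j < n \<Longrightarrow> u j = 0"
  unfolding dot_def using sum_nonneg_eq_0_iff[of "{..<n}" "\<lambda>j. u j * u j"] by auto

lemma dot_self_pos_iff: "0 < dot n u u \<longleftrightarrow> (\<exists>j<n. u j \<noteq> 0)"
proof
  assume pos: "0 < dot n u u"
  show "\<exists>j<n. u j \<noteq> 0"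
  proof (rule ccontr)
    assume "\<not> (\<exists>j<n. u j \<noteq> 0)"
    hence "dot n u u = 0" unfolding dot_def by (auto intro!: sum.neutral)
    with pos show False by simp
  qed
next
  assume "\<exists>j<n. u j \<noteq> 0"
  thus "0 < dot n u u" using dot_self_nonneg[of n u] dot_self_eq_0D[of n u] by fastforce
qed

lemma abs_le_sqrt_dot_self: "j < n \<Longrightarrow> \<bar>u j\<bar> \<le> sqrt (dot n u u)"
  using real_sqrt_le_mono[OF member_le_sum[of j "{..<n}" "\<lambda>j. u j * u j"]]
  by (simp add: dot_def real_sqrt_mult_self)

lemma dot_cong: "(\<And>j. j < n \<Longrightarrow> u j = u' j) \<Longrightarrow> (\<And>j. j < n \<Longrightarrow> v j = v' j) \<Longrightarrow> dot n u v = dot n u' v'"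
  unfolding dot_def by (intro sum.cong) auto

lemma mat_vec_cong: "(\<And>j. j < n \<Longrightarrow> u j = u' j) \<Longrightarrow> mat_vec A n u r = mat_vec A n u' r"
  unfolding mat_vec_def by (intro sum.cong) auto

lemma dot_restrict_left [simp]: "dot n (restrict u {..<n}) v = dot n u v"
  by (rule dot_cong) auto

lemma dot_restrict_right [simp]: "dot n u (restrict v {..<n}) = dot n u v"
  by (rule dot_cong) auto

lemma mat_vec_restrict [simp]: "mat_vec A n (restrict u {..<n}) r = mat_vec A n u r"
  by (rule mat_vec_cong) auto

lemma dot_add_scaled_left: "dot n (\<lambda>j. a j + t * b j) k = dot n a k + t * dot n b k"
  unfolding dot_def by (simp add: algebra_simps sum.distrib sum_distrib_left)

lemma dot_scale_left: "dot n (\<lambda>j. s * a j) k = s * dot n a k"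
  unfolding dot_def by (simp add: algebra_simps sum_distrib_left)

lemma dot_scale_right: "dot n a (\<lambda>j. s * b j) = s * dot n a b"
  unfolding dot_def by (simp add: algebra_simps sum_distrib_left)

lemma dot_add_scaled_self:
  "dot n (\<lambda>j. a j + t * b j) (\<lambda>j. a j + t * b j) = dot n a a + 2*t*dot n a b + t^2 * dot n b b"
  unfolding dot_def by (simp add: algebra_simps power2_eq_square sum.distrib sum_distrib_left)

lemma mat_vec_add_scaled: "mat_vec A n (\<lambda>j. a j + t * b j) r = mat_vec A n a r + t * mat_vec A n b r"
  unfolding mat_vec_def by (simp add: algebra_simps sum.distrib sum_distrib_left)

lemma mat_vec_scale: "mat_vec A n (\<lambda>j. s * a j) r = s * mat_vec A n a r"
  unfolding mat_vec_def by (simp add: algebra_simps sum_distrib_left)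

lemma mat_vec_unit: "j < n \<Longrightarrow> mat_vec A n (\<lambda>i. if i = j then 1 else 0) r = A r j"
  unfolding mat_vec_def by (simp add: if_distrib cong: if_cong)

lemma dot_self_sub_projection_less:
  assumes "dot n d k \<noteq> 0"
  defines "t \<equiv> - dot n d k / dot n k k"
  shows "dot n (\<lambda>j. d j + t * k j) (\<lambda>j. d j + t * k j) < dot n d d"
proof -
  have kpos: "dot n k k > 0"
  proof (rule ccontr)
    assume "\<not> dot n k k > 0"
    hence "\<forall>j<n. k j = 0" using dot_self_nonneg[of n k] dot_self_eq_0D[of n k] by simp
    hence "dot n d k = 0" unfolding dot_def by simp
    with assms(1) show False ..
  qed
  have "dot n (\<lambda>j. d j + t * k j) (\<lambda>j. d j + t * k j) = dot n d d - (dot n d k)\<^sup>2 / dot n k k"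
    unfolding dot_add_scaled_self t_def using kpos by (simp add: field_simps power2_eq_square)
  thus ?thesis using assms(1) kpos by simp
qed

lemma dot_normalised:
  assumes "0 < dot n u u"
  shows "dot n (\<lambda>j. inverse (sqrt (dot n u u)) * u j) (\<lambda>j. inverse (sqrt (dot n u u)) * u j) = 1"
    and "dot n (\<lambda>j. inverse (sqrt (dot n u u)) * u j) k = inverse (sqrt (dot n u u)) * dot n u k"
  unfolding dot_scale_left dot_scale_right using assms by (simp_all add: field_simps)

lemma sq_norm_rows_nonneg: "0 \<le> sq_norm_rows R A n u"
  unfolding sq_norm_rows_def by (intro sum_nonneg) auto

lemma sq_norm_rows_scale: "sq_norm_rows R A n (\<lambda>j. s * u j) = s\<^sup>2 * sq_norm_rows R A n u"
  unfolding sq_norm_rows_def mat_vec_scale by (simp add: power_mult_distrib sum_distrib_left)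

lemma sq_norm_rows_add_scaled:
  "sq_norm_rows R A n (\<lambda>j. a j + t * b j) =
   sq_norm_rows R A n a + 2*t*(\<Sum>r\<in>R. mat_vec A n a r * mat_vec A n b r) + t^2 * sq_norm_rows R A n b"
  unfolding sq_norm_rows_def mat_vec_add_scaled
  by (simp add: algebra_simps power2_eq_square sum.distrib sum_distrib_left)

lemma sq_norm_rows_eq_0_iff: "finite R \<Longrightarrow> sq_norm_rows R A n u = 0 \<longleftrightarrow> u \<in> kernel_rows R A n"
  unfolding sq_norm_rows_def kernel_rows_def by (simp add: sum_nonneg_eq_0_iff)

lemma sum_mat_vec_mult_eq_dot:
  "(\<Sum>r\<in>R. mat_vec A n v r * mat_vec A n u r) = dot n (\<lambda>j. \<Sum>r\<in>R. A r j * mat_vec A n v r) u"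
  unfolding dot_def mat_vec_def
  by (simp add: sum_distrib_left sum_distrib_right sum.swap[of _ R] mult.assoc mult.left_commute)

lemma orth_kernel_add_scaled:
  "orth_kernel R A n a \<Longrightarrow> orth_kernel R A n b \<Longrightarrow> orth_kernel R A n (\<lambda>j. a j + t * b j)"
  unfolding orth_kernel_def by (simp add: dot_add_scaled_left)

lemma finite_nz_sing_vals: "finite (nz_sing_vals R n A)"
proof -
  define B where "B = Matrix.mat n n (\<lambda>(i,j). \<Sum>r\<in>R. A r i * A r j)"
  have Bc: "B \<in> carrier_mat n n" unfolding B_def by simp
  have ne: "char_poly B \<noteq> 0" using degree_monic_char_poly[OF Bc] by auto
  have "nz_sing_vals R n A \<subseteq> sqrt ` {x. poly (char_poly B) x = 0}"
  proof
    fix \<sigma> assume "\<sigma> \<in> nz_sing_vals R n A"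
    then obtain v where s: "\<sigma> > 0" and v: "\<exists>j<n. v j \<noteq> 0"
      and ev: "\<forall>j<n. (\<Sum>r\<in>R. A r j * (\<Sum>k<n. A r k * v k)) = \<sigma>\<^sup>2 * v j"
      unfolding nz_sing_vals_def by auto
    have "eigenvalue B (\<sigma>\<^sup>2)"
      unfolding eigenvalue_def eigenvector_def
    proof (intro exI conjI)
      show "Matrix.vec n v \<in> carrier_vec (dim_row B)" using Bc by simp
      show "Matrix.vec n v \<noteq> 0\<^sub>v (dim_row B)" using v Bc
        by (metis carrier_matD(1) index_vec index_zero_vec(1))
      show "B *\<^sub>v Matrix.vec n v = \<sigma>\<^sup>2 \<cdot>\<^sub>v Matrix.vec n v"
      proof (rule eq_vecI)
        fix i assume "i < dim_vec (\<sigma>\<^sup>2 \<cdot>\<^sub>v Matrix.vec n v)"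
        hence i: "i < n" by simp
        have "(B *\<^sub>v Matrix.vec n v) $ i = (\<Sum>k<n. (\<Sum>r\<in>R. A r i * A r k) * v k)"
          using i unfolding B_def by (simp add: scalar_prod_def lessThan_atLeast0)
        also have "\<dots> = (\<Sum>r\<in>R. A r i * (\<Sum>k<n. A r k * v k))"
          by (simp add: sum_distrib_left sum_distrib_right mult.assoc sum.swap[of _ R])
        finally show "(B *\<^sub>v Matrix.vec n v) $ i = (\<sigma>\<^sup>2 \<cdot>\<^sub>v Matrix.vec n v) $ i"
          using ev i by simp
      qed (simp add: B_def)
    qed
    hence "poly (char_poly B) (\<sigma>\<^sup>2) = 0" using eigenvalue_root_char_poly[OF Bc] by simp
    thus "\<sigma> \<in> sqrt ` {x. poly (char_poly B) x = 0}" using s by (intro image_eqI[of _ _ "\<sigma>\<^sup>2"]) auto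
  qed
  thus ?thesis using poly_roots_finite[OF ne] finite_subset by blast
qed

lemma sigma_min_in: "nz_sing_vals R n A \<noteq> {} \<Longrightarrow> sigma_min R n A \<in> nz_sing_vals R n A"
  unfolding sigma_min_def by (rule Min_in[OF finite_nz_sing_vals])

lemma sigma_min_pos: "nz_sing_vals R n A \<noteq> {} \<Longrightarrow> sigma_min R n A > 0"
  using sigma_min_in unfolding nz_sing_vals_def by blast

lemma sigma_min_le: "\<sigma> \<in> nz_sing_vals R n A \<Longrightarrow> sigma_min R n A \<le> \<sigma>"
  unfolding sigma_min_def by (rule Min_le[OF finite_nz_sing_vals])

section \<open>Minimisation over compact sets of coordinate vectors\<close>

abbreviation coord_top :: "nat \<Rightarrow> (nat \<Rightarrow> real) topology" where
  "coord_top n \<equiv> product_topology (\<lambda>_. euclideanreal) {..<n}"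

lemma restrict_in_coord_top: "restrict u {..<n} \<in> topspace (coord_top n)"
  by (simp add: topspace_product_topology)

lemma continuous_map_coord: "j < n \<Longrightarrow> continuous_map (coord_top n) euclideanreal (\<lambda>u. u j)"
  using continuous_map_product_projection[of j "{..<n}" "\<lambda>_. euclideanreal"] by simp

lemma continuous_map_dot:
  assumes "\<And>j. j < n \<Longrightarrow> continuous_map (coord_top n) euclideanreal (\<lambda>u. k u j)"
  shows "continuous_map (coord_top n) euclideanreal (\<lambda>u. dot n u (k u))"
  unfolding dot_def
  by (intro continuous_map_sum continuous_map_real_mult continuous_map_coord assms) auto

lemma continuous_map_dot_self: "continuous_map (coord_top n) euclideanreal (\<lambda>u. dot n u u)"
  by (rule continuous_map_dot) (rule continuous_map_coord)

lemma continuous_map_sq_norm_rows_diff: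
  assumes "finite R"
  shows "continuous_map (coord_top n) euclideanreal (\<lambda>u. \<Sum>r\<in>R. (mat_vec A n u r - c r)\<^sup>2)"
proof -
  have "continuous_map (coord_top n) euclideanreal (\<lambda>u. mat_vec A n u r - c r)" for r
    unfolding mat_vec_def
    by (intro continuous_map_diff continuous_map_sum continuous_map_real_mult continuous_map_coord)
      (auto simp: continuous_map_const)
  thus ?thesis unfolding power2_eq_square
    using assms by (intro continuous_map_sum continuous_map_real_mult) auto
qed

lemma continuous_map_attains_min_in_box:
  assumes g: "continuous_map (coord_top n) euclideanreal g"
    and C: "closedin (coord_top n) C" "C \<subseteq> PiE {..<n} (\<lambda>_. {-\<rho>..\<rho>})" "C \<noteq> {}"
  obtains u where "u \<in> C" "\<forall>v\<in>C. g u \<le> g v"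
proof -
  have "compactin (coord_top n) (PiE {..<n} (\<lambda>_. {-\<rho>..\<rho>}))"
    unfolding compactin_PiE compactin_euclidean_iff by simp
  hence "compactin (coord_top n) C" using closed_compactin C(1,2) by metis
  hence "compact (g ` C)" using image_compactin[OF _ g] compactin_euclidean_iff by metis
  moreover have "g ` C \<noteq> {}" using C(3) by simp
  ultimately obtain s where "s \<in> g ` C" "\<forall>t\<in>g ` C. s \<le> t" using compact_attains_inf by metis
  thus ?thesis using that by auto
qed

lemma dot_ball_subset_box:
  "{u \<in> topspace (coord_top n). dot n u u \<le> \<rho>} \<subseteq> PiE {..<n} (\<lambda>_. {-sqrt \<rho>..sqrt \<rho>})"
proof
  fix u assume u: "u \<in> {u \<in> topspace (coord_top n). dot n u u \<le> \<rho>}"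
  have "sqrt (dot n u u) \<le> sqrt \<rho>" using u by simp
  hence "\<bar>u j\<bar> \<le> sqrt \<rho>" if "j < n" for j using abs_le_sqrt_dot_self[OF that, of u] by linarith
  hence "u j \<in> {-sqrt \<rho>..sqrt \<rho>}" if "j < n" for j using that abs_le_iff by fastforce
  thus "u \<in> PiE {..<n} (\<lambda>_. {-sqrt \<rho>..sqrt \<rho>})"
    using u by (auto simp: topspace_product_topology PiE_iff)
qed

section \<open>Minimal-norm solutions and the least singular value\<close>

text \<open>A solution of A d = A w (on the rows R) of minimal norm exists by compactness, and it is
  orthogonal to the kernel, since otherwise subtracting its projection onto a kernel vector shortens it.\<close>
lemma exists_solution_orth_kernel:
  assumes finR: "finite R"
  obtains d where "\<forall>r\<in>R. mat_vec A n d r = mat_vec A n w r" "orth_kernel R A n d"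
proof -
  define C where "C = {d \<in> topspace (coord_top n). (\<Sum>r\<in>R. (mat_vec A n d r - mat_vec A n w r)\<^sup>2) \<in> {0}}
     \<inter> {d \<in> topspace (coord_top n). dot n d d \<in> {..dot n w w}}"
  have sol: "\<forall>r\<in>R. mat_vec A n d r = mat_vec A n w r" if "d \<in> C" for d
    using that sum_nonneg_eq_0_iff[OF finR, of "\<lambda>r. (mat_vec A n d r - mat_vec A n w r)\<^sup>2"]
    unfolding C_def by simp
  have closed: "closedin (coord_top n) C" unfolding C_def
    by (intro closedin_Int closedin_continuous_map_preimage[OF continuous_map_dot_self]
        closedin_continuous_map_preimage[OF continuous_map_sq_norm_rows_diff[OF finR]]) auto
  have box: "C \<subseteq> PiE {..<n} (\<lambda>_. {-sqrt (dot n w w)..sqrt (dot n w w)})"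
    using dot_ball_subset_box unfolding C_def by blast
  have "restrict w {..<n} \<in> C" unfolding C_def by (auto simp: restrict_in_coord_top)
  then obtain d where dC: "d \<in> C" and dmin: "\<forall>v\<in>C. dot n d d \<le> dot n v v"
    using continuous_map_attains_min_in_box[OF continuous_map_dot_self closed box] by blast
  have "dot n d k = 0" if k: "k \<in> kernel_rows R A n" for k
  proof (rule ccontr)
    assume ne: "dot n d k \<noteq> 0"
    define d' where "d' = restrict (\<lambda>j. d j + (- dot n d k / dot n k k) * k j) {..<n}"
    have lt: "dot n d' d' < dot n d d"
      unfolding d'_def using dot_self_sub_projection_less[OF ne] by simp
    have "\<forall>r\<in>R. mat_vec A n d' r = mat_vec A n w r"
      using sol[OF dC] k unfolding d'_def kernel_rows_def mat_vec_restrict mat_vec_add_scaled by simp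
    moreover have "d' \<in> topspace (coord_top n)" unfolding d'_def by (rule restrict_in_coord_top)
    ultimately have "d' \<in> C" using lt dC unfolding C_def by auto
    with dmin lt show False by fastforce
  qed
  thus ?thesis using that sol[OF dC] unfolding orth_kernel_def by blast
qed

lemma exists_rayleigh_minimiser:
  assumes finR: "finite R" and u0: "dot n u0 u0 > 0" "orth_kernel R A n u0"
  obtains v where "dot n v v = 1" "orth_kernel R A n v"
    "\<forall>u. orth_kernel R A n u \<longrightarrow> sq_norm_rows R A n v * dot n u u \<le> sq_norm_rows R A n u"
proof -
  define C where "C = {u \<in> topspace (coord_top n). dot n u u \<in> {1}} \<inter>
       \<Inter> ((\<lambda>k. {u \<in> topspace (coord_top n). dot n u k \<in> {0}}) ` kernel_rows R A n)"
  have "closedin (coord_top n) {u \<in> topspace (coord_top n). dot n u k \<in> {0}}" for k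
    by (rule closedin_continuous_map_preimage[OF continuous_map_dot]) (auto simp: continuous_map_const)
  moreover have "(\<lambda>_. 0) \<in> kernel_rows R A n" unfolding kernel_rows_def mat_vec_def by simp
  ultimately have closed: "closedin (coord_top n) C" unfolding C_def
    by (intro closedin_Int closedin_Inter closedin_continuous_map_preimage[OF continuous_map_dot_self]) auto
  have box: "C \<subseteq> PiE {..<n} (\<lambda>_. {-1..1})"
    using dot_ball_subset_box[of n 1] unfolding C_def by auto
  have normalised: "restrict (\<lambda>j. inverse (sqrt (dot n u u)) * u j) {..<n} \<in> C"
    if u: "dot n u u > 0" "orth_kernel R A n u" for u
  proof -
    let ?u = "restrict (\<lambda>j. inverse (sqrt (dot n u u)) * u j) {..<n}"
    have "dot n ?u ?u = 1" using dot_normalised(1)[OF u(1)] by (simp only: dot_restrict_left dot_restrict_right)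
    moreover have "dot n ?u k = 0" if "k \<in> kernel_rows R A n" for k
      using dot_normalised(2)[OF u(1)] u(2) that unfolding orth_kernel_def dot_restrict_left by simp
    ultimately show ?thesis unfolding C_def using restrict_in_coord_top by blast
  qed
  have cont: "continuous_map (coord_top n) euclideanreal (sq_norm_rows R A n)"
    using continuous_map_sq_norm_rows_diff[OF finR, of n A "\<lambda>_. 0"]
    unfolding sq_norm_rows_def by simp
  obtain v where vC: "v \<in> C" and vmin: "\<forall>u\<in>C. sq_norm_rows R A n v \<le> sq_norm_rows R A n u"
    using continuous_map_attains_min_in_box[OF cont closed box] normalised[OF u0] by blast
  have "sq_norm_rows R A n v * dot n u u \<le> sq_norm_rows R A n u" if u: "orth_kernel R A n u" for u
  proof (cases "dot n u u = 0")
    case True thus ?thesis using sq_norm_rows_nonneg by simp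
  next
    case False
    hence up: "dot n u u > 0" using dot_self_nonneg[of n u] by simp
    let ?s = "inverse (sqrt (dot n u u))"
    have "sq_norm_rows R A n v \<le> sq_norm_rows R A n (restrict (\<lambda>j. ?s * u j) {..<n})"
      using vmin normalised[OF up u] by blast
    also have "\<dots> = sq_norm_rows R A n (\<lambda>j. ?s * u j)" unfolding sq_norm_rows_def by simp
    also have "\<dots> = ?s\<^sup>2 * sq_norm_rows R A n u" by (rule sq_norm_rows_scale)
    finally show ?thesis using up by (simp add: power_divide field_simps)
  qed
  thus ?thesis using that vC unfolding C_def orth_kernel_def by auto
qed

lemma linear_coeff_eq_0_if_quadratic_nonneg:
  fixes a b :: real
  assumes "\<forall>t. 0 \<le> 2*t*a + t^2*b"
  shows "a = 0"
proof (rule ccontr)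
  assume a: "a \<noteq> 0"
  define s where "s = 1/(\<bar>b\<bar>+1)"
  have s: "s > 0" "s * b < 2" unfolding s_def by (auto simp: field_simps abs_if)
  have "0 \<le> 2*(-a * s)*a + (-a * s)^2*b" using assms by blast
  also have "\<dots> = a^2 * s * (s*b - 2)" by (simp add: power2_eq_square algebra_simps)
  also have "\<dots> < 0" using a s by (intro mult_pos_neg) auto
  finally show False by simp
qed

text \<open>First variation: the residual A^T A v - \<lambda> v is orthogonal both to the kernel and to its
  orthogonal complement, hence zero.\<close>
lemma rayleigh_minimiser_eigenvector:
  assumes v1: "dot n v v = 1" and vorth: "orth_kernel R A n v"
    and vmin: "\<forall>u. orth_kernel R A n u \<longrightarrow> sq_norm_rows R A n v * dot n u u \<le> sq_norm_rows R A n u"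
  shows "\<forall>j<n. (\<Sum>r\<in>R. A r j * mat_vec A n v r) = sq_norm_rows R A n v * v j"
proof -
  define lam where "lam = sq_norm_rows R A n v"
  define e where "e = (\<lambda>j. (\<Sum>r\<in>R. A r j * mat_vec A n v r) - lam * v j)"
  have e_dot: "dot n e u = (\<Sum>r\<in>R. mat_vec A n v r * mat_vec A n u r) - lam * dot n v u" for u
    unfolding e_def sum_mat_vec_mult_eq_dot dot_def by (simp add: algebra_simps sum_subtractf sum_distrib_left)
  have e_orth: "orth_kernel R A n e"
    using vorth unfolding orth_kernel_def e_dot kernel_rows_def by simp
  have "0 \<le> 2*t*dot n e e + t^2*(sq_norm_rows R A n e - lam * dot n e e)" for t
  proof -
    have "lam * dot n (\<lambda>j. v j + t * e j) (\<lambda>j. v j + t * e j) \<le> sq_norm_rows R A n (\<lambda>j. v j + t * e j)"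
      using vmin orth_kernel_add_scaled[OF vorth e_orth] unfolding lam_def by blast
    thus ?thesis unfolding dot_add_scaled_self sq_norm_rows_add_scaled e_dot
      using v1 unfolding lam_def by (simp add: algebra_simps)
  qed
  hence "dot n e e = 0" by (intro linear_coeff_eq_0_if_quadratic_nonneg) blast
  hence "e j = 0" if "j < n" for j using dot_self_eq_0D that by blast
  thus ?thesis unfolding e_def lam_def by simp
qed

lemma sigma_min_mult_norm_le:
  assumes finR: "finite R" and u: "orth_kernel R A n u" "u \<notin> kernel_rows R A n"
  shows "nz_sing_vals R n A \<noteq> {} \<and> sigma_min R n A * sqrt (dot n u u) \<le> sqrt (sq_norm_rows R A n u)"
proof -
  have "dot n u u > 0"
  proof (rule ccontr)
    assume "\<not> dot n u u > 0"
    hence "\<forall>j<n. u j = 0" using dot_self_nonneg[of n u] dot_self_eq_0D[of n u] by simp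
    hence "u \<in> kernel_rows R A n" unfolding kernel_rows_def mat_vec_def by simp
    with u(2) show False ..
  qed
  then obtain v where v1: "dot n v v = 1" and vorth: "orth_kernel R A n v"
    and vmin: "\<forall>u. orth_kernel R A n u \<longrightarrow> sq_norm_rows R A n v * dot n u u \<le> sq_norm_rows R A n u"
    using exists_rayleigh_minimiser[OF finR _ u(1)] by blast
  define lam where "lam = sq_norm_rows R A n v"
  have "v \<notin> kernel_rows R A n" using vorth v1 unfolding orth_kernel_def by auto
  hence "lam \<noteq> 0" using sq_norm_rows_eq_0_iff[OF finR] unfolding lam_def by blast
  hence lpos: "lam > 0" using sq_norm_rows_nonneg[of R A n v] unfolding lam_def by linarith
  have "sqrt lam \<in> nz_sing_vals R n A"
    using rayleigh_minimiser_eigenvector[OF v1 vorth vmin] lpos v1 dot_self_pos_iff[of n v]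
    unfolding nz_sing_vals_def lam_def mat_vec_def by auto
  hence ne: "nz_sing_vals R n A \<noteq> {}" and sm: "sigma_min R n A \<le> sqrt lam"
    using sigma_min_le by auto
  have "sqrt lam * sqrt (dot n u u) \<le> sqrt (sq_norm_rows R A n u)"
    using vmin u(1) unfolding lam_def by (simp add: real_sqrt_mult[symmetric])
  moreover have "sigma_min R n A * sqrt (dot n u u) \<le> sqrt lam * sqrt (dot n u u)"
    using sm dot_self_nonneg[of n u] by (intro mult_right_mono) auto
  ultimately show ?thesis using ne by simp
qed

lemma exists_preimage_sigma_min_bound:
  assumes finR: "finite R" and nz: "\<exists>r\<in>R. mat_vec A n w r \<noteq> 0"
  obtains d where "\<forall>r\<in>R. mat_vec A n d r = mat_vec A n w r" "nz_sing_vals R n A \<noteq> {}"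
    "sigma_min R n A * sqrt (dot n d d) \<le> sqrt (sq_norm_rows R A n d)"
proof -
  obtain d where dA: "\<forall>r\<in>R. mat_vec A n d r = mat_vec A n w r" and dorth: "orth_kernel R A n d"
    using exists_solution_orth_kernel[OF finR] by blast
  have "d \<notin> kernel_rows R A n" using dA nz unfolding kernel_rows_def by auto
  thus ?thesis using that dA sigma_min_mult_norm_le[OF finR dorth] by blast
qed

lemma nz_sing_vals_nonempty:
  assumes "finite R" "r \<in> R" "j < n" "A r j \<noteq> 0"
  shows "nz_sing_vals R n A \<noteq> {}"
proof -
  have "\<exists>r\<in>R. mat_vec A n (\<lambda>i. if i = j then 1 else 0) r \<noteq> 0"
    using assms(2-4) mat_vec_unit by metis
  thus ?thesis using exists_preimage_sigma_min_bound[OF assms(1)] by blast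
qed

section \<open>The trimmed norm\<close>

lemma finite_trim_sets: "finite {\<Lambda>. \<Lambda> \<subseteq> {..<m} \<and> card \<Lambda> = m - K}"
  by (rule finite_subset[of _ "Pow {..<m}"]) auto

lemma trimmed_attained:
  obtains \<Lambda> where "\<Lambda> \<subseteq> {..<m}" "card \<Lambda> = m - K" "trimmed K m p z = (\<Sum>i\<in>\<Lambda>. block_norm p z i)"
proof -
  have "{..<m - K} \<in> {\<Lambda>. \<Lambda> \<subseteq> {..<m} \<and> card \<Lambda> = m - K}" by auto
  hence "trimmed K m p z \<in> (\<lambda>\<Lambda>. \<Sum>i\<in>\<Lambda>. block_norm p z i) ` {\<Lambda>. \<Lambda> \<subseteq> {..<m} \<and> card \<Lambda> = m - K}"
    unfolding trimmed_def using finite_trim_sets by (intro Min_in) blast+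
  thus ?thesis using that by auto
qed

lemma trimmed_le: "\<Lambda> \<subseteq> {..<m} \<Longrightarrow> card \<Lambda> = m - K \<Longrightarrow> trimmed K m p z \<le> (\<Sum>i\<in>\<Lambda>. block_norm p z i)"
  unfolding trimmed_def using finite_trim_sets by (intro Min_le) auto

lemma trimmed_nonneg: "trimmed K m p z \<ge> 0"
  by (rule trimmed_attained[of m K p z]) (simp add: sum_nonneg block_norm_def)

lemma block_norm_scale:
  assumes "0 \<le> s" "\<forall>k<p. z' (i*p+k) = s * z (i*p+k)"
  shows "block_norm p z' i = s * block_norm p z i"
proof -
  have "block_norm p z' i = L2_set (\<lambda>k. s * z (i*p+k)) {..<p}"
    unfolding block_norm_def using assms(2) by (intro L2_set_cong) auto
  thus ?thesis unfolding block_norm_def using assms(1) by (simp add: L2_set_right_distrib)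
qed

lemma block_norm_one: "block_norm 1 z i = \<bar>z i\<bar>"
  unfolding block_norm_def L2_set_def by (simp add: lessThan_Suc)

lemma block_rows_eq_image: "block_rows p \<Lambda> = (\<lambda>(i,k). i*p+k) ` (\<Lambda> \<times> {..<p})"
  unfolding block_rows_def by auto

lemma inj_on_block_index: "inj_on (\<lambda>(i,k). i*p+k) (\<Lambda> \<times> {..<(p::nat)})"
proof (rule inj_onI, clarify)
  fix i k i' k' :: nat assume k: "k < p" "k' < p" and e: "i*p+k = i'*p+k'"
  have "(i*p+k) div p = i" "(i*p+k) mod p = k" "(i'*p+k') div p = i'" "(i'*p+k') mod p = k'"
    using k by auto
  thus "i = i' \<and> k = k'" using e by metis
qed

lemma finite_block_rows: "finite \<Lambda> \<Longrightarrow> finite (block_rows p \<Lambda>)"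
  unfolding block_rows_eq_image by simp

lemma block_rows_subset: "\<Lambda> \<subseteq> {..<m} \<Longrightarrow> block_rows p \<Lambda> \<subseteq> {..<m * p}"
proof
  fix r assume "\<Lambda> \<subseteq> {..<m}" "r \<in> block_rows p \<Lambda>"
  then obtain i k where "i < m" "k < p" "r = i * p + k" unfolding block_rows_def by blast
  moreover have "Suc i * p \<le> m * p" using \<open>i < m\<close> by (intro mult_right_mono) auto
  ultimately show "r \<in> {..<m * p}" by simp
qed

lemma sqrt_sum_sq_block_rows_le:
  assumes "finite \<Lambda>"
  shows "sqrt (\<Sum>r\<in>block_rows p \<Lambda>. (z r)\<^sup>2) \<le> (\<Sum>i\<in>\<Lambda>. block_norm p z i)"
proof -
  have "(\<Sum>r\<in>block_rows p \<Lambda>. (z r)\<^sup>2) = (\<Sum>(i,k)\<in>\<Lambda> \<times> {..<p}. (z (i*p+k))\<^sup>2)"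
    unfolding block_rows_eq_image by (subst sum.reindex[OF inj_on_block_index]) (simp add: case_prod_beta)
  also have "\<dots> = (\<Sum>i\<in>\<Lambda>. \<Sum>k<p. (z (i*p+k))\<^sup>2)" by (simp add: sum.cartesian_product)
  also have "\<dots> = (\<Sum>i\<in>\<Lambda>. (block_norm p z i)\<^sup>2)"
    unfolding block_norm_def L2_set_def by (simp add: sum_nonneg)
  finally have "sqrt (\<Sum>r\<in>block_rows p \<Lambda>. (z r)\<^sup>2) = L2_set (block_norm p z) \<Lambda>"
    unfolding L2_set_def by simp
  also have "\<dots> \<le> (\<Sum>i\<in>\<Lambda>. block_norm p z i)" by (rule L2_set_le_sum) (simp add: block_norm_def)
  finally show ?thesis .
qed

lemma block_rows_nonzero_if_sum_block_norm_nonzero: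
  assumes "(\<Sum>i\<in>\<Lambda>. block_norm p z i) \<noteq> 0"
  shows "\<exists>r\<in>block_rows p \<Lambda>. z r \<noteq> 0"
proof (rule ccontr)
  assume "\<not> ?thesis"
  hence "z (i * p + k) = 0" if "i \<in> \<Lambda>" "k < p" for i k
    using that unfolding block_rows_def by blast
  hence "block_norm p z i = 0" if "i \<in> \<Lambda>" for i
    using that unfolding block_norm_def L2_set_def by (simp add: sum.neutral)
  with assms show False by simp
qed

lemma resid_eq_mat_vec: "resid n D c y r = mat_vec D n y r - c r"
  unfolding resid_def mat_vec_def by simp

lemma trimmed_resid_descent:
  assumes \<Lambda>: "\<Lambda> \<subseteq> {..<m}" "card \<Lambda> = m - K"
      "trimmed K m p (resid n D c x) = (\<Sum>i\<in>\<Lambda>. block_norm p (resid n D c x) i)"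
    and v: "\<forall>r\<in>block_rows p \<Lambda>. mat_vec D n v r = - resid n D c x r"
    and t: "0 \<le> t" "t \<le> 1"
  shows "trimmed K m p (resid n D c (\<lambda>j. x j + t * v j)) \<le> (1 - t) * trimmed K m p (resid n D c x)"
proof -
  have "block_norm p (resid n D c (\<lambda>j. x j + t * v j)) i = (1 - t) * block_norm p (resid n D c x) i"
    if "i \<in> \<Lambda>" for i
  proof (rule block_norm_scale)
    show "\<forall>k<p. resid n D c (\<lambda>j. x j + t * v j) (i*p+k) = (1 - t) * resid n D c x (i*p+k)"
    proof (intro allI impI)
      fix k assume "k < p"
      hence "i * p + k \<in> block_rows p \<Lambda>" unfolding block_rows_def using \<open>i \<in> \<Lambda>\<close> by blast
      hence vk: "mat_vec D n v (i*p+k) = c (i*p+k) - mat_vec D n x (i*p+k)"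
        using v unfolding resid_eq_mat_vec by simp
      show "resid n D c (\<lambda>j. x j + t * v j) (i*p+k) = (1 - t) * resid n D c x (i*p+k)"
        unfolding resid_eq_mat_vec mat_vec_add_scaled vk by (simp add: algebra_simps)
    qed
  qed (use t in simp)
  hence "(\<Sum>i\<in>\<Lambda>. block_norm p (resid n D c (\<lambda>j. x j + t * v j)) i) = (1 - t) * trimmed K m p (resid n D c x)"
    unfolding \<Lambda>(3) sum_distrib_left by simp
  thus ?thesis using trimmed_le[OF \<Lambda>(1,2)] by metis
qed

lemma sigma_K_le_sigma_min_block_rows:
  assumes "\<not> mat_surj (m * p) n A" "\<Lambda> \<subseteq> {..<m}" "card \<Lambda> = m - K"
    "\<exists>r\<in>block_rows p \<Lambda>. \<exists>j<n. A r j \<noteq> 0"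
  shows "0 < sigma_K K m p n A \<and> sigma_K K m p n A \<le> sigma_min (block_rows p \<Lambda>) n A"
proof -
  define S where "S = {sigma_min (block_rows p \<Lambda>') n A | \<Lambda>'. \<Lambda>' \<subseteq> {..<m} \<and> card \<Lambda>' = m - K \<and>
                  (\<exists>r\<in>block_rows p \<Lambda>'. \<exists>j<n. A r j \<noteq> 0)}"
  have sK: "sigma_K K m p n A = Min S" unfolding sigma_K_def S_def using assms(1) by simp
  have finS: "finite S"
    by (rule finite_subset[of _ "(\<lambda>\<Lambda>'. sigma_min (block_rows p \<Lambda>') n A) ` Pow {..<m}"])
      (auto simp: S_def)
  have inS: "sigma_min (block_rows p \<Lambda>) n A \<in> S" unfolding S_def using assms(2-4) by blast
  have "s > 0" if "s \<in> S" for s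
  proof -
    obtain \<Lambda>' r j where "s = sigma_min (block_rows p \<Lambda>') n A" "\<Lambda>' \<subseteq> {..<m}"
      "r \<in> block_rows p \<Lambda>'" "j < n" "A r j \<noteq> 0"
      using \<open>s \<in> S\<close> unfolding S_def by blast
    moreover have "finite (block_rows p \<Lambda>')"
      using \<open>\<Lambda>' \<subseteq> {..<m}\<close> finite_block_rows finite_subset by blast
    ultimately show ?thesis using sigma_min_pos[OF nz_sing_vals_nonempty] by simp
  qed
  moreover have "Min S \<in> S" using Min_in[OF finS] inS by blast
  ultimately show ?thesis unfolding sK using Min_le[OF finS inS] by simp
qed

lemma mat_vec_nonzero_imp_entry_nonzero:
  assumes "mat_vec A n w r \<noteq> 0"
  obtains j where "j < n" "A r j \<noteq> 0"
proof -
  obtain j where "j < n" "A r j * w j \<noteq> 0"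
    using assms sum.not_neutral_contains_not_neutral unfolding mat_vec_def by blast
  thus ?thesis using that by simp
qed

text \<open>For surjective A, the values y on the rows R are extended by zero to all N rows.\<close>
lemma surj_preimage_sigma_min_bound:
  assumes surj: "mat_surj N n A" and R: "R \<subseteq> {..<N}" and y: "\<exists>r\<in>R. y r \<noteq> 0"
  obtains d where "\<forall>r\<in>R. mat_vec A n d r = y r" "sigma_min {..<N} n A > 0"
    "sigma_min {..<N} n A * sqrt (dot n d d) \<le> sqrt (\<Sum>r\<in>R. (y r)\<^sup>2)"
proof -
  obtain v where v: "\<forall>r<N. mat_vec A n v r = (if r \<in> R then y r else 0)"
    using surj[unfolded mat_surj_def, rule_format, of "\<lambda>r. if r \<in> R then y r else 0"]
    unfolding mat_vec_def by blast
  obtain r where "r \<in> R" "y r \<noteq> 0" using y by blast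
  hence "\<exists>r\<in>{..<N}. mat_vec A n v r \<noteq> 0" using v R by (intro bexI[of _ r]) auto
  then obtain d where dA: "\<forall>r\<in>{..<N}. mat_vec A n d r = mat_vec A n v r"
    and ne: "nz_sing_vals {..<N} n A \<noteq> {}"
    and bound: "sigma_min {..<N} n A * sqrt (dot n d d) \<le> sqrt (sq_norm_rows {..<N} A n d)"
    using exists_preimage_sigma_min_bound[of "{..<N}"] by blast
  have "sq_norm_rows {..<N} A n d = (\<Sum>r\<in>{..<N}. if r \<in> R then (y r)\<^sup>2 else 0)"
    unfolding sq_norm_rows_def using dA v by (intro sum.cong) auto
  also have "\<dots> = (\<Sum>r\<in>R. (y r)\<^sup>2)" using R by (simp add: sum.inter_restrict[symmetric] inf.absorb2)
  finally have "sq_norm_rows {..<N} A n d = (\<Sum>r\<in>R. (y r)\<^sup>2)" .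
  moreover have "\<forall>r\<in>R. mat_vec A n d r = y r" using dA v R by auto
  ultimately show ?thesis using that[of d] bound sigma_min_pos[OF ne] by simp
qed

lemma sigma_K_preimage_bound:
  assumes \<Lambda>: "\<Lambda> \<subseteq> {..<m}" "card \<Lambda> = m - K"
    and y: "\<exists>r\<in>block_rows p \<Lambda>. y r \<noteq> 0"
    and w: "\<forall>r\<in>block_rows p \<Lambda>. mat_vec A n w r = y r"
  obtains d where "\<forall>r\<in>block_rows p \<Lambda>. mat_vec A n d r = y r" "sigma_K K m p n A > 0"
    "sigma_K K m p n A * sqrt (dot n d d) \<le> sqrt (\<Sum>r\<in>block_rows p \<Lambda>. (y r)\<^sup>2)"
proof (cases "mat_surj (m * p) n A")
  case True
  hence "sigma_K K m p n A = sigma_min {..<m * p} n A" unfolding sigma_K_def by simp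
  thus ?thesis using surj_preimage_sigma_min_bound[OF True block_rows_subset[OF \<Lambda>(1)] y] that by metis
next
  case False
  let ?R = "block_rows p \<Lambda>"
  have finR: "finite ?R" using \<Lambda>(1) finite_block_rows finite_subset by blast
  obtain r where r: "r \<in> ?R" "mat_vec A n w r \<noteq> 0" using y w by auto
  then obtain d where dA: "\<forall>r\<in>?R. mat_vec A n d r = mat_vec A n w r"
    and bound: "sigma_min ?R n A * sqrt (dot n d d) \<le> sqrt (sq_norm_rows ?R A n d)"
    using exists_preimage_sigma_min_bound[OF finR] by blast
  obtain j where "j < n" "A r j \<noteq> 0" using mat_vec_nonzero_imp_entry_nonzero[OF r(2)] .
  hence sK: "0 < sigma_K K m p n A" "sigma_K K m p n A \<le> sigma_min ?R n A"
    using sigma_K_le_sigma_min_block_rows[OF False \<Lambda>] r(1) by auto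
  have "sigma_K K m p n A * sqrt (dot n d d) \<le> sigma_min ?R n A * sqrt (dot n d d)"
    using sK dot_self_nonneg[of n d] by (intro mult_right_mono) auto
  moreover have "sq_norm_rows ?R A n d = (\<Sum>r\<in>?R. (y r)\<^sup>2)" unfolding sq_norm_rows_def using dA w by simp
  ultimately show ?thesis using that[of d] dA w bound sK by simp
qed

section \<open>Descent along a single block\<close>

definition block_dir :: "(nat \<Rightarrow> nat) \<Rightarrow> nat \<Rightarrow> (nat \<Rightarrow> real) \<Rightarrow> nat \<Rightarrow> nat \<Rightarrow> real" where
  "block_dir n l v = (\<lambda>l' i. if l' = l \<and> i < n l then v i else 0)"

lemma block_step_in_point_space:
  "x \<in> point_space L n \<Longrightarrow> l \<le> L \<Longrightarrow> (\<lambda>l' i. x l' i + t * block_dir n l v l' i) \<in> point_space L n"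
  unfolding point_space_def block_dir_def by auto

lemma norm2_pt_block_step:
  assumes "l \<le> L" "0 \<le> t"
  shows "norm2_pt L n (diff_pt (\<lambda>l' i. x l' i + t * block_dir n l v l' i) x) = t * sqrt (dot (n l) v v)"
proof -
  have "(\<Sum>i<n l'. (diff_pt (\<lambda>l' i. x l' i + t * block_dir n l v l' i) x l' i)\<^sup>2)
      = (if l' = l then t\<^sup>2 * dot (n l) v v else 0)" for l'
    unfolding diff_pt_def dot_def block_dir_def
    by (auto simp: power_mult_distrib power2_eq_square sum_distrib_left intro!: sum.cong)
  thus ?thesis unfolding norm2_pt_def using assms dot_self_nonneg by (simp add: real_sqrt_mult)
qed

lemma norm1_pt_block_step:
  assumes "l \<le> L" "0 \<le> t"
  shows "norm1_pt L n (diff_pt (\<lambda>l' i. x l' i + t * block_dir n l v l' i) x) = t * (\<Sum>i<n l. \<bar>v i\<bar>)"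
proof -
  have "(\<Sum>i<n l'. \<bar>diff_pt (\<lambda>l' i. x l' i + t * block_dir n l v l' i) x l' i\<bar>)
      = (if l' = l then t * (\<Sum>i<n l. \<bar>v i\<bar>) else 0)" for l'
    unfolding diff_pt_def block_dir_def using assms(2)
    by (auto simp: abs_mult sum_distrib_left intro!: sum.cong)
  thus ?thesis unfolding norm1_pt_def using assms by simp
qed

lemma has_dir_deriv_nonneg_imp_slope_bound_nonneg:
  assumes "has_dir_deriv F x d Dv" "0 \<le> Dv"
    and "\<forall>t. 0 < t \<and> t \<le> 1 \<longrightarrow> F (\<lambda>l i. x l i + t * d l i) - F x \<le> t * C"
  shows "0 \<le> C"
proof -
  have "\<forall>\<^sub>F t in at_right 0. (F (\<lambda>l i. x l i + t * d l i) - F x) / t \<le> C"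
    using eventually_at_right_real[of 0 1]
    by (rule eventually_mono) (use assms(3) in \<open>auto simp: divide_le_eq mult.commute\<close>)
  moreover have "((\<lambda>t. (F (\<lambda>l i. x l i + t * d l i) - F x) / t) \<longlongrightarrow> Dv) (at_right 0)"
    using assms(1) unfolding has_dir_deriv_def .
  ultimately have "Dv \<le> C" using tendsto_upperbound trivial_limit_at_right_real by blast
  thus ?thesis using assms(2) by simp
qed

lemma objective_block_step:
  assumes l: "l \<in> {1..L}"
  shows "objective L n m p K \<gamma> c D f (\<lambda>l' i. x l' i + t * block_dir n l v l' i) - objective L n m p K \<gamma> c D f x
    = f (\<lambda>l' i. x l' i + t * block_dir n l v l' i) - f x
      + \<gamma> l * (trimmed (K l) (m l) (p l) (resid (n l) (D l) (c l) (\<lambda>i. x l i + t * v i))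
               - trimmed (K l) (m l) (p l) (resid (n l) (D l) (c l) (x l)))"
proof -
  define x' where "x' = (\<lambda>l' i. x l' i + t * block_dir n l v l' i)"
  define g where "g = (\<lambda>y l'. \<gamma> l' * trimmed (K l') (m l') (p l') (resid (n l') (D l') (c l') (y l')))"
  have "resid (n l) (D l) (c l) (x' l) = resid (n l) (D l) (c l) (\<lambda>i. x l i + t * v i)"
    unfolding resid_def x'_def block_dir_def by (intro ext sum.cong refl) auto
  hence gl: "g x' l = \<gamma> l * trimmed (K l) (m l) (p l) (resid (n l) (D l) (c l) (\<lambda>i. x l i + t * v i))"
    unfolding g_def by simp
  have "x' l' = x l'" if "l' \<noteq> l" for l' unfolding x'_def block_dir_def using that by auto
  hence rest: "(\<Sum>l'\<in>{1..L}-{l}. g x' l') = (\<Sum>l'\<in>{1..L}-{l}. g x l')" unfolding g_def by simp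
  have split: "objective L n m p K \<gamma> c D f y = f y + g y l + (\<Sum>l'\<in>{1..L}-{l}. g y l')" for y
  proof -
    have "objective L n m p K \<gamma> c D f y = f y + sum (g y) {1..L}" unfolding objective_def g_def ..
    thus ?thesis using sum.remove[OF _ l, of "g y"] by simp
  qed
  show ?thesis unfolding x'_def[symmetric] split rest gl by (simp add: g_def right_diff_distrib)
qed

lemma d_stationary_trimmed_le:
  assumes ds: "d_stationary L n (objective L n m p K \<gamma> c D f) x"
    and l: "l \<in> {1..L}" and gnn: "0 \<le> \<gamma> l"
    and \<Lambda>: "\<Lambda> \<subseteq> {..<m l}" "card \<Lambda> = m l - K l"
      "trimmed (K l) (m l) (p l) (resid (n l) (D l) (c l) (x l))
         = (\<Sum>i\<in>\<Lambda>. block_norm (p l) (resid (n l) (D l) (c l) (x l)) i)"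
    and v: "\<forall>r\<in>block_rows (p l) \<Lambda>. mat_vec (D l) (n l) v r = - resid (n l) (D l) (c l) (x l) r"
    and f_step: "\<forall>t. 0 < t \<and> t \<le> 1 \<longrightarrow> f (\<lambda>l' i. x l' i + t * block_dir n l v l' i) - f x \<le> t * B"
  shows "\<gamma> l * trimmed (K l) (m l) (p l) (resid (n l) (D l) (c l) (x l)) \<le> B"
proof -
  define F where "F = objective L n m p K \<gamma> c D f"
  define T where "T = (\<lambda>y. trimmed (K l) (m l) (p l) (resid (n l) (D l) (c l) y))"
  have "block_dir n l v \<in> point_space L n" unfolding point_space_def block_dir_def using l by auto
  then obtain Dv where hd: "has_dir_deriv F x (block_dir n l v) Dv" and "0 \<le> Dv"
    using ds unfolding d_stationary_def F_def by blast
  have "F (\<lambda>l' i. x l' i + t * block_dir n l v l' i) - F x \<le> t * (B - \<gamma> l * T (x l))"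
    if t: "0 < t" "t \<le> 1" for t
  proof -
    have "T (\<lambda>i. x l i + t * v i) \<le> (1 - t) * T (x l)"
      unfolding T_def using trimmed_resid_descent[OF \<Lambda> v] t by simp
    hence "\<gamma> l * T (\<lambda>i. x l i + t * v i) \<le> \<gamma> l * ((1 - t) * T (x l))"
      by (rule mult_left_mono) (rule gnn)
    hence "\<gamma> l * (T (\<lambda>i. x l i + t * v i) - T (x l)) \<le> - (t * (\<gamma> l * T (x l)))"
      by (simp add: algebra_simps)
    moreover have "f (\<lambda>l' i. x l' i + t * block_dir n l v l' i) - f x \<le> t * B" using f_step t by blast
    ultimately show ?thesis
      unfolding F_def objective_block_step[OF l] T_def right_diff_distrib by linarith
  qed
  hence "0 \<le> B - \<gamma> l * T (x l)" using has_dir_deriv_nonneg_imp_slope_bound_nonneg[OF hd \<open>0 \<le> Dv\<close>] by blast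
  thus ?thesis unfolding T_def by simp
qed

section \<open>Exactness of the penalty\<close>

text \<open>Feasibility makes the residual on the rows of \<Lambda> an image of D, so the bound defining
  sigma_K applies to it.\<close>
lemma exists_residual_cancelling_direction:
  assumes \<Lambda>: "\<Lambda> \<subseteq> {..<m}" "card \<Lambda> = m - K"
      "trimmed K m p (resid n D c x) = (\<Sum>i\<in>\<Lambda>. block_norm p (resid n D c x) i)"
    and nz: "trimmed K m p (resid n D c x) \<noteq> 0"
    and feasible: "\<exists>xb. \<forall>r<m * p. (\<Sum>j<n. D r j * xb j) = c r"
  obtains v where "\<forall>r\<in>block_rows p \<Lambda>. mat_vec D n v r = - resid n D c x r" "sigma_K K m p n D > 0"
    "sigma_K K m p n D * sqrt (dot n v v) \<le> trimmed K m p (resid n D c x)"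
proof -
  define y where "y = (\<lambda>r. - resid n D c x r)"
  obtain xb where xb: "\<forall>r<m * p. mat_vec D n xb r = c r"
    using feasible unfolding mat_vec_def by blast
  have "\<forall>r\<in>block_rows p \<Lambda>. mat_vec D n (\<lambda>j. xb j + (-1) * x j) r = y r"
    using xb block_rows_subset[OF \<Lambda>(1)] unfolding mat_vec_add_scaled resid_eq_mat_vec y_def by auto
  moreover have "\<exists>r\<in>block_rows p \<Lambda>. y r \<noteq> 0"
    using block_rows_nonzero_if_sum_block_norm_nonzero \<Lambda>(3) nz unfolding y_def by simp
  ultimately obtain v where v: "\<forall>r\<in>block_rows p \<Lambda>. mat_vec D n v r = y r"
    and "sigma_K K m p n D > 0"
    and "sigma_K K m p n D * sqrt (dot n v v) \<le> sqrt (\<Sum>r\<in>block_rows p \<Lambda>. (y r)\<^sup>2)"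
    using sigma_K_preimage_bound[OF \<Lambda>(1,2)] by blast
  moreover have "sqrt (\<Sum>r\<in>block_rows p \<Lambda>. (y r)\<^sup>2) \<le> trimmed K m p (resid n D c x)"
    unfolding \<Lambda>(3) y_def using sqrt_sum_sq_block_rows_le finite_subset[OF \<Lambda>(1)] by simp
  ultimately show ?thesis using that[of v] v unfolding y_def by fastforce
qed

lemma d_stationary_trimmed_eq_0:
  assumes ds: "d_stationary L n (objective L n m p K \<gamma> c D f) x"
    and l: "l \<in> {1..L}" and gpos: "\<gamma> l > 0"
    and f_lip: "\<forall>x\<in>point_space L n. \<forall>y\<in>point_space L n. \<bar>f x - f y\<bar> \<le> M * norm2_pt L n (diff_pt x y)"
    and feasible: "\<exists>xb. \<forall>r<m l * p l. (\<Sum>j<n l. D l r j * xb j) = c l r"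
    and threshold: "\<gamma> l > M / sigma_K (K l) (m l) (p l) (n l) (D l)"
  shows "trimmed (K l) (m l) (p l) (resid (n l) (D l) (c l) (x l)) = 0"
proof (rule ccontr)
  let ?T = "trimmed (K l) (m l) (p l) (resid (n l) (D l) (c l) (x l))"
  let ?\<sigma> = "sigma_K (K l) (m l) (p l) (n l) (D l)"
  assume "?T \<noteq> 0"
  hence Tpos: "?T > 0" using trimmed_nonneg by (metis order_less_le)
  obtain \<Lambda> where \<Lambda>: "\<Lambda> \<subseteq> {..<m l}" "card \<Lambda> = m l - K l"
      "?T = (\<Sum>i\<in>\<Lambda>. block_norm (p l) (resid (n l) (D l) (c l) (x l)) i)"
    using trimmed_attained by blast
  obtain v where v: "\<forall>r\<in>block_rows (p l) \<Lambda>. mat_vec (D l) (n l) v r = - resid (n l) (D l) (c l) (x l) r"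
    and \<sigma>pos: "?\<sigma> > 0" and \<sigma>v: "?\<sigma> * sqrt (dot (n l) v v) \<le> ?T"
    using exists_residual_cancelling_direction[OF \<Lambda> \<open>?T \<noteq> 0\<close> feasible] .
  have x: "x \<in> point_space L n" using ds unfolding d_stationary_def by blast
  have gain: "\<gamma> l * ?T \<le> M * sqrt (dot (n l) v v)"
  proof (rule d_stationary_trimmed_le[OF ds l less_imp_le[OF gpos] \<Lambda> v], intro allI impI)
    fix t :: real assume t: "0 < t \<and> t \<le> 1"
    let ?x' = "\<lambda>l' i. x l' i + t * block_dir n l v l' i"
    have "?x' \<in> point_space L n" using block_step_in_point_space[OF x] l by simp
    hence "f ?x' - f x \<le> M * norm2_pt L n (diff_pt ?x' x)" using f_lip x by fastforce
    thus "f ?x' - f x \<le> t * (M * sqrt (dot (n l) v v))"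
      using norm2_pt_block_step[of l L t n x v] l t by (simp add: mult.left_commute)
  qed
  have "0 < \<gamma> l * ?T" using gpos Tpos by simp
  hence "0 < M * sqrt (dot (n l) v v)" using gain by linarith
  hence "M > 0" using dot_self_nonneg[of "n l" v] by (auto simp: zero_less_mult_iff)
  have "\<gamma> l * ?\<sigma> * ?T \<le> M * (?\<sigma> * sqrt (dot (n l) v v))"
    using mult_right_mono[OF gain, of ?\<sigma>] \<sigma>pos by (simp add: mult_ac)
  also have "\<dots> \<le> M * ?T" using \<sigma>v \<open>M > 0\<close> by simp
  also have "\<dots> < \<gamma> l * ?\<sigma> * ?T"
    using threshold \<sigma>pos Tpos by (simp add: divide_less_eq mult_strict_right_mono)
  finally show False by simp
qed

lemma mat_vec_identity:
  assumes "\<forall>r<m. \<forall>j<m. D r j = (if r = j then 1 else 0)" "r < m"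
  shows "mat_vec D m y r = y r"
proof -
  have "mat_vec D m y r = (\<Sum>j<m. if r = j then y j else 0)"
    unfolding mat_vec_def using assms by (intro sum.cong) auto
  thus ?thesis using assms(2) by simp
qed

lemma block_rows_one: "block_rows 1 \<Lambda> = \<Lambda>"
  unfolding block_rows_def by auto

lemma d_stationary_identity_trimmed_eq_0:
  assumes ds: "d_stationary L n (objective L n m p K \<gamma> c D f) x"
    and l: "l \<in> {1..L}"
    and struct: "p l = 1" "n l = m l" "\<forall>r<m l. \<forall>j<n l. D l r j = (if r = j then 1 else 0)"
      "\<forall>r<m l. c l r = 0"
    and f_lip: "\<forall>x\<in>point_space L n. \<forall>y\<in>point_space L n. \<bar>f x - f y\<bar> \<le> M' * norm1_pt L n (diff_pt x y)"
    and threshold: "\<gamma> l > M'" and gnn: "0 \<le> \<gamma> l"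
  shows "trimmed (K l) (m l) (p l) (resid (n l) (D l) (c l) (x l)) = 0"
proof -
  let ?z = "resid (n l) (D l) (c l) (x l)"
  let ?T = "trimmed (K l) (m l) (p l) ?z"
  have resid_id: "resid (n l) (D l) (c l) y r = y r" if "r < m l" for y r
    using mat_vec_identity[of "m l" "D l" r y] struct that unfolding resid_eq_mat_vec by simp
  obtain \<Lambda> where \<Lambda>: "\<Lambda> \<subseteq> {..<m l}" "card \<Lambda> = m l - K l" "?T = (\<Sum>i\<in>\<Lambda>. block_norm (p l) ?z i)"
    using trimmed_attained by blast
  have "(\<Sum>i\<in>\<Lambda>. block_norm (p l) ?z i) = (\<Sum>i\<in>\<Lambda>. \<bar>x l i\<bar>)"
    unfolding struct(1) block_norm_one using \<Lambda>(1) resid_id by (intro sum.cong) auto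
  hence T_eq: "?T = (\<Sum>i\<in>\<Lambda>. \<bar>x l i\<bar>)" using \<Lambda>(3) by simp
  define v where "v = (\<lambda>i. if i \<in> \<Lambda> then - x l i else 0)"
  have v: "\<forall>r\<in>block_rows (p l) \<Lambda>. mat_vec (D l) (n l) v r = - ?z r"
    using \<Lambda>(1) resid_id[of _ v] resid_id[of _ "x l"] unfolding struct(1) block_rows_one
    by (auto simp: resid_eq_mat_vec struct(4) v_def)
  have "(\<Sum>i<n l. \<bar>v i\<bar>) = (\<Sum>i<n l. if i \<in> \<Lambda> then \<bar>x l i\<bar> else 0)"
    unfolding v_def by (intro sum.cong) auto
  also have "\<dots> = (\<Sum>i\<in>\<Lambda>. \<bar>x l i\<bar>)"
    using \<Lambda>(1) struct(2) by (simp add: sum.inter_restrict[symmetric] inf.absorb2)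
  finally have v_norm: "(\<Sum>i<n l. \<bar>v i\<bar>) = ?T" unfolding T_eq .
  have x: "x \<in> point_space L n" using ds unfolding d_stationary_def by blast
  have "\<gamma> l * ?T \<le> M' * ?T"
  proof (rule d_stationary_trimmed_le[OF ds l gnn \<Lambda> v], intro allI impI)
    fix t :: real assume t: "0 < t \<and> t \<le> 1"
    let ?x' = "\<lambda>l' i. x l' i + t * block_dir n l v l' i"
    have "?x' \<in> point_space L n" using block_step_in_point_space[OF x] l by simp
    hence "f ?x' - f x \<le> M' * norm1_pt L n (diff_pt ?x' x)" using f_lip x by fastforce
    thus "f ?x' - f x \<le> t * (M' * ?T)"
      using norm1_pt_block_step[of l L t n x v] v_norm l t by (simp add: mult.left_commute)
  qed
  hence "(\<gamma> l - M') * ?T \<le> 0" by (simp add: algebra_simps)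
  hence "?T \<le> 0" using threshold by (simp add: mult_le_0_iff)
  thus ?thesis using trimmed_nonneg[of "K l" "m l" "p l" ?z] by simp
qed

theorem mainTheorem6:
  fixes L :: nat and n m p K :: "nat \<Rightarrow> nat"
    and \<gamma> :: "nat \<Rightarrow> real" and c :: "nat \<Rightarrow> nat \<Rightarrow> real"
    and D :: "nat \<Rightarrow> nat \<Rightarrow> nat \<Rightarrow> real"
    and f :: "(nat \<Rightarrow> nat \<Rightarrow> real) \<Rightarrow> real" and M :: real
  assumes gamma_pos: "\<forall>l\<in>{1..L}. \<gamma> l > 0"
    and K_range: "\<forall>l\<in>{1..L}. K l < m l"
    and D_nonzero: "\<forall>l\<in>{1..L}. \<exists>r<m l * p l. \<exists>j<n l. D l r j \<noteq> 0"
    and f_dd: "dir_differentiable L n f"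
    and f_lip: "\<forall>x\<in>point_space L n. \<forall>y\<in>point_space L n.
                  \<bar>f x - f y\<bar> \<le> M * norm2_pt L n (diff_pt x y)"
    and feasible: "\<forall>l\<in>{1..L}. \<exists>xb. \<forall>r<m l * p l. (\<Sum>j<n l. D l r j * xb j) = c l r"
  shows "(\<forall>xs. d_stationary L n (objective L n m p K \<gamma> c D f) xs \<and>
              (\<forall>l\<in>{1..L}. \<gamma> l > M / sigma_K (K l) (m l) (p l) (n l) (D l))
            \<longrightarrow> (\<forall>l\<in>{1..L}. trimmed (K l) (m l) (p l) (resid (n l) (D l) (c l) (xs l)) = 0))
       \<and> (\<forall>M'::real.
            (\<forall>l\<in>{1..L}. p l = 1 \<and> n l = m l \<and>
                (\<forall>r<m l. \<forall>j<n l. D l r j = (if r = j then 1 else 0)) \<and>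
                (\<forall>r<m l. c l r = 0)) \<and>
            (\<forall>x\<in>point_space L n. \<forall>y\<in>point_space L n.
                  \<bar>f x - f y\<bar> \<le> M' * norm1_pt L n (diff_pt x y))
            \<longrightarrow> (\<forall>xs. d_stationary L n (objective L n m p K \<gamma> c D f) xs \<and>
                    (\<forall>l\<in>{1..L}. \<gamma> l > M')
                  \<longrightarrow> (\<forall>l\<in>{1..L}. trimmed (K l) (m l) (p l) (resid (n l) (D l) (c l) (xs l)) = 0)))"
proof (intro conjI allI impI ballI)
  fix xs l
  assume "d_stationary L n (objective L n m p K \<gamma> c D f) xs \<and>
          (\<forall>l\<in>{1..L}. \<gamma> l > M / sigma_K (K l) (m l) (p l) (n l) (D l))"
    and l: "l \<in> {1..L}"
  thus "trimmed (K l) (m l) (p l) (resid (n l) (D l) (c l) (xs l)) = 0"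
    using gamma_pos feasible l by (intro d_stationary_trimmed_eq_0[OF _ l _ f_lip]) auto
next
  fix M' :: real and xs l
  assume "(\<forall>l\<in>{1..L}. p l = 1 \<and> n l = m l \<and>
             (\<forall>r<m l. \<forall>j<n l. D l r j = (if r = j then 1 else 0)) \<and> (\<forall>r<m l. c l r = 0)) \<and>
          (\<forall>x\<in>point_space L n. \<forall>y\<in>point_space L n. \<bar>f x - f y\<bar> \<le> M' * norm1_pt L n (diff_pt x y))"
    and "d_stationary L n (objective L n m p K \<gamma> c D f) xs \<and> (\<forall>l\<in>{1..L}. \<gamma> l > M')"
    and l: "l \<in> {1..L}"
  thus "trimmed (K l) (m l) (p l) (resid (n l) (D l) (c l) (xs l)) = 0"
    using gamma_pos l by (intro d_stationary_identity_trimmed_eq_0[OF _ l]) (auto intro: less_imp_le)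
qed

end
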